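(* Let $n$ be a prime and $k$ an integer with $2\le k<n/2$. Let $\underline{g}=[g_1,\dots,g_k]\in\underline{\mathbf{G}}_{\mathrm{tot}}$. For $p=0,1,\dots,n-1$ put $v_p=1+p\,g_1 \pmod n$ and let $\mathcal{E}_p$ be the set of entries of the vector $\underline{r}_{\underline{g}}+p\,g_1\cdot\underline{1}\pmod n$. Then $(v_0,\mathcal{E}_0,v_1,\mathcal{E}_1,\dots,v_{n-1},\mathcal{E}_{n-1},v_0)$ is a Hamiltonian (Berge) cycle of the complete $k$-uniform hypergraph $K_n^k$ on vertex set $[n]$: the vertices $v_0,\dots,v_{n-1}$ are exactly the elements of $[n]$, each listed once; the $\mathcal{E}_p$ are $n$ pairwise distinct $k$-subsets of $[n]$; and $\{v_p,v_{p+1}\}\subseteq\mathcal{E}_p$ for every $p$ (indices mod $n$). Moreover $\{\mathcal{E}_0,\dots,\mathcal{E}_{n-1}\}$ is exactly the set of underlying sets of the elements of $\underline{\mathbf{C}}_{\underline{g}}$.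
   Context: $[n]=\{1,\dots,n\}$; reduction mod $n$ is entrywise with representatives in $[n]$, and $\underline{1}$ is the all-ones vector of length $k$. For an integer vector $\underline{g}=[g_1,\dots,g_k]$ with $g_i\ge1$ for $i\in[k-1]$ and $g_1+\dots+g_{k-1}\le n-1$, the representative vector is $\underline{r}_{\underline{g}}=[1,1+g_1,1+g_1+g_2,\dots,1+g_1+\cdots+g_{k-1}]$ and $\underline{\mathbf{C}}_{\underline{g}}=\{\underline{r}_{\underline{g}}+p\cdot\underline{1}\ (\mathrm{mod}\ n):p=0,\dots,n-1\}$. The generator set: let $\sigma_{\min}=k-1$ and $\sigma_{\max}=n-\lceil n/k\rceil$. For $\sigma\in[\sigma_{\min},\sigma_{\max}]$ let $\underline{\mathbf{S}}_\sigma=\{[c_1,\dots,c_{k-1}]\in\mathbb{Z}^{k-1}:\sum_i c_i=\sigma,\ 1\le c_i\le n-\sigma\}$ and $\underline{\mathbf{G}}_\sigma=\{[c_1,\dots,c_{k-1},m]:[c_1,\dots,c_{k-1}]\in\underline{\mathbf{S}}_\sigma\}$ where $m=-\sigma$ if $\sigma\le\lfloor n/2\rfloor$ and $m=n-\sigma$ otherwise. Finally $\underline{\mathbf{G}}_{\mathrm{tot}}=\bigcup_{\sigma=\sigma_{\min}}^{\sigma_{\max}}\underline{\mathbf{G}}_\sigma$. The complete $k$-uniform hypergraph $K_n^k$ has vertex set $[n]$ and every $k$-subset of $[n]$ as a hyperedge. A (Berge) Hamiltonian cycle is a sequence $(v_1,\mathcal{E}_1,v_2,\dots,v_n,\mathcal{E}_n,v_1)$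 with $v_1,\dots,v_n$ a permutation of $[n]$, $\mathcal{E}_1,\dots,\mathcal{E}_n$ distinct hyperedges, and $v_i,v_{i+1}\in\mathcal{E}_i$ (indices mod $n$). *)

theory Defs
  imports Complex_Main "HOL-Computational_Algebra.Primes"
begin

definition modn :: "nat \<Rightarrow> int \<Rightarrow> int" where
  "modn n x = (x - 1) mod int n + 1"

text \<open>Vectors of length k are int lists; entry i (1-based) is the list element at index i-1.
  Representative vector r_g = [1, 1+g_1, ..., 1+g_1+...+g_(k-1)].\<close>
definition rep_vec :: "nat \<Rightarrow> int list \<Rightarrow> int list" where
  "rep_vec k g = map (\<lambda>i. 1 + sum_list (take i g)) [0..<k]"

definition C_set :: "nat \<Rightarrow> nat \<Rightarrow> int list \<Rightarrow> int list set" where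
  "C_set n k g = {map (\<lambda>x. modn n (x + int p)) (rep_vec k g) | p. p < n}"

definition sigma_min :: "nat \<Rightarrow> int" where
  "sigma_min k = int k - 1"

definition sigma_max :: "nat \<Rightarrow> nat \<Rightarrow> int" where
  "sigma_max n k = int n - \<lceil>real n / real k\<rceil>"

definition S_set :: "nat \<Rightarrow> nat \<Rightarrow> int \<Rightarrow> int list set" where
  "S_set n k \<sigma> = {c. length c = k - 1 \<and> sum_list c = \<sigma> \<and>
       (\<forall>i < k - 1. 1 \<le> c ! i \<and> c ! i \<le> int n - \<sigma>)}"

definition G_set :: "nat \<Rightarrow> nat \<Rightarrow> int \<Rightarrow> int list set" where
  "G_set n k \<sigma> = {c @ [if \<sigma> \<le> int n div 2 then - \<sigma> else int n - \<sigma>] | c. c \<in> S_set n k \<sigma>}"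

definition G_tot :: "nat \<Rightarrow> nat \<Rightarrow> int list set" where
  "G_tot n k = (\<Union>\<sigma> \<in> {sigma_min k .. sigma_max n k}. G_set n k \<sigma>)"

definition hyperedges_K :: "nat \<Rightarrow> nat \<Rightarrow> int set set" where
  "hyperedges_K n k = {E. E \<subseteq> {1..int n} \<and> card E = k}"

definition berge_ham_cycle :: "nat \<Rightarrow> nat \<Rightarrow> (nat \<Rightarrow> int) \<Rightarrow> (nat \<Rightarrow> int set) \<Rightarrow> bool" where
  "berge_ham_cycle n k v E \<longleftrightarrow>
     bij_betw v {0..<n} {1..int n} \<and>
     (\<forall>p < n. E p \<in> hyperedges_K n k) \<and>
     inj_on E {0..<n} \<and>
     (\<forall>p < n. {v p, v ((p + 1) mod n)} \<subseteq> E p)"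

end

theory Submission
  imports Defs
begin

text \<open>The representative vector of \<open>g\<close> is strictly increasing with entries in \<open>[n]\<close>, so its
  entries are pairwise incongruent mod \<open>n\<close> and each \<open>\<E>\<^sub>p\<close> is a \<open>k\<close>-set. Since \<open>n\<close> is prime,
  \<open>g\<^sub>1\<close> is a unit mod \<open>n\<close>: \<open>p \<mapsto> 1 + p g\<^sub>1\<close> enumerates \<open>[n]\<close>, and the shifts \<open>p g\<^sub>1\<close>
  run through all residues, which identifies the \<open>\<E>\<^sub>p\<close> with the sets of \<open>C\<^sub>g\<close>. Consecutive
  vertices \<open>1 + p g\<^sub>1\<close> and \<open>1 + g\<^sub>1 + p g\<^sub>1\<close> are the first two entries of the shifted vector.
  Finally the \<open>\<E>\<^sub>p\<close> are distinct because the element sum of \<open>\<E>\<^sub>p\<close> is \<open>\<Sum>r\<^sub>g + k p g\<^sub>1\<close>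
  mod \<open>n\<close>, and \<open>k g\<^sub>1\<close> is a unit.\<close>

lemma modn_eq_iff: "0 < n \<Longrightarrow> modn n x = modn n y \<longleftrightarrow> int n dvd x - y"
  unfolding modn_def by (simp add: mod_eq_dvd_iff)

lemma modn_in_range:
  assumes "0 < n" shows "modn n x \<in> {1..int n}"
proof -
  have "0 \<le> (x - 1) mod int n" "(x - 1) mod int n < int n" using assms by simp_all
  then show ?thesis unfolding modn_def by simp
qed

lemma modn_mod: "modn n x mod int n = x mod int n"
  unfolding modn_def by (simp add: mod_add_left_eq)

lemma modn_id: "x \<in> {1..int n} \<Longrightarrow> modn n x = x"
  unfolding modn_def by (simp add: mod_pos_pos_trivial)

lemma eq_if_dvd_diff_in_range:
  assumes "x \<in> {1..int n}" "y \<in> {1..int n}" "int n dvd x - y"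
  shows "x = y"
  using assms modn_eq_iff[of n x y] by (simp add: modn_id)

lemma nat_eq_if_dvd_diff:
  assumes "p < n" "q < n" "int n dvd int p - int q"
  shows "p = q"
  using eq_if_dvd_diff_in_range[of "int p + 1" n "int q + 1"] assms by simp

lemma not_dvd_if_in_range: "0 < a \<Longrightarrow> a < int n \<Longrightarrow> \<not> int n dvd a"
  using zdvd_imp_le by fastforce

lemma prime_dvd_mult_diff_imp_eq:
  assumes "prime n" "\<not> int n dvd a" "p < n" "q < n" "int n dvd (int p - int q) * a"
  shows "p = q"
  using assms nat_eq_if_dvd_diff prime_dvd_mult_iff[of "int n"] by auto

lemma bij_betw_modn_affine:
  assumes "prime n" "\<not> int n dvd a"
  shows "bij_betw (\<lambda>p. modn n (b + int p * a)) {0..<n} {1..int n}"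
proof -
  have n: "0 < n" using assms(1) prime_gt_0_nat by blast
  have inj: "inj_on (\<lambda>p. modn n (b + int p * a)) {0..<n}"
  proof (rule inj_onI)
    fix p q assume "p \<in> {0..<n}" "q \<in> {0..<n}" "modn n (b + int p * a) = modn n (b + int q * a)"
    moreover have "(b + int p * a) - (b + int q * a) = (int p - int q) * a"
      by (simp add: algebra_simps)
    ultimately show "p = q" using prime_dvd_mult_diff_imp_eq[OF assms] modn_eq_iff[OF n] by auto
  qed
  moreover have "(\<lambda>p. modn n (b + int p * a)) ` {0..<n} = {1..int n}"
    using modn_in_range[OF n] inj by (intro card_subset_eq) (auto simp: card_image)
  ultimately show ?thesis by (simp add: bij_betw_def)
qed

definition translate_modn :: "nat \<Rightarrow> int \<Rightarrow> int set \<Rightarrow> int set" where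
  "translate_modn n t A = (\<lambda>x. modn n (x + t)) ` A"

lemma translate_modn_subset: "0 < n \<Longrightarrow> translate_modn n t A \<subseteq> {1..int n}"
  unfolding translate_modn_def using modn_in_range by blast

lemma translate_modn_cong:
  "0 < n \<Longrightarrow> int n dvd s - t \<Longrightarrow> translate_modn n s A = translate_modn n t A"
  unfolding translate_modn_def
  by (intro image_cong refl) (simp add: modn_eq_iff)

lemma inj_on_translate_modn:
  assumes "0 < n" "A \<subseteq> {1..int n}"
  shows "inj_on (\<lambda>x. modn n (x + t)) A"
proof (rule inj_onI)
  fix x y assume "x \<in> A" "y \<in> A" "modn n (x + t) = modn n (y + t)"
  then have "int n dvd x - y" using modn_eq_iff[OF assms(1)] by simp
  with \<open>x \<in> A\<close> \<open>y \<in> A\<close> show "x = y" using assms(2) eq_if_dvd_diff_in_range by blast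
qed

lemma card_translate_modn:
  "0 < n \<Longrightarrow> A \<subseteq> {1..int n} \<Longrightarrow> card (translate_modn n t A) = card A"
  unfolding translate_modn_def by (simp add: card_image inj_on_translate_modn)

lemma sum_translate_modn:
  assumes "0 < n" "A \<subseteq> {1..int n}"
  shows "\<Sum>(translate_modn n t A) mod int n = (\<Sum>A + int (card A) * t) mod int n"
proof -
  have "\<Sum>(translate_modn n t A) = (\<Sum>x\<in>A. modn n (x + t))"
    unfolding translate_modn_def using inj_on_translate_modn[OF assms] by (simp add: sum.reindex)
  also have "\<dots> mod int n = (\<Sum>x\<in>A. modn n (x + t) mod int n) mod int n"
    by (simp add: mod_sum_eq)
  also have "\<dots> = (\<Sum>x\<in>A. x + t) mod int n"
    by (simp add: modn_mod mod_sum_eq)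
  finally show ?thesis by (simp add: sum.distrib)
qed

text \<open>The element sums of the translates differ mod \<open>n\<close>.\<close>

lemma inj_on_translate_modn_mult:
  assumes "prime n" "\<not> int n dvd a" "A \<subseteq> {1..int n}" "0 < card A" "card A < n"
  shows "inj_on (\<lambda>p. translate_modn n (int p * a) A) {0..<n}"
proof (rule inj_onI)
  fix p q assume pq: "p \<in> {0..<n}" "q \<in> {0..<n}"
    and eq: "translate_modn n (int p * a) A = translate_modn n (int q * a) A"
  have n: "0 < n" using assms(1) prime_gt_0_nat by blast
  have "(\<Sum>A + int (card A) * (int p * a)) mod int n = (\<Sum>A + int (card A) * (int q * a)) mod int n"
    using eq sum_translate_modn[OF n assms(3)] by metis
  then have "int n dvd int (card A) * ((int p - int q) * a)"
    by (simp add: mod_eq_dvd_iff algebra_simps)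
  moreover have "\<not> int n dvd int (card A)" using not_dvd_if_in_range[of "int (card A)" n] assms(4,5) by simp
  ultimately show "p = q"
    using prime_dvd_mult_diff_imp_eq[OF assms(1,2)] pq assms(1) prime_dvd_mult_iff[of "int n"]
    by auto
qed

lemma ex_less_dvd_diff: "0 < n \<Longrightarrow> \<exists>q<n. int n dvd t - int q"
  by (rule exI[of _ "nat (t mod int n)"]) (simp add: nat_less_iff flip: mod_eq_dvd_iff)

lemma translate_modn_mult_image:
  assumes "prime n" "\<not> int n dvd a"
  shows "(\<lambda>p. translate_modn n (int p * a) A) ` {0..<n} = (\<lambda>q. translate_modn n (int q) A) ` {0..<n}"
proof (intro equalityI subsetI)
  have n: "0 < n" using assms(1) prime_gt_0_nat by blast
  fix X
  assume "X \<in> (\<lambda>p. translate_modn n (int p * a) A) ` {0..<n}"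
  then obtain p where X: "X = translate_modn n (int p * a) A" by auto
  obtain q where "q < n" "int n dvd int p * a - int q" using ex_less_dvd_diff[OF n] by blast
  then show "X \<in> (\<lambda>q. translate_modn n (int q) A) ` {0..<n}"
    using X translate_modn_cong[OF n] by auto
next
  have n: "0 < n" using assms(1) prime_gt_0_nat by blast
  fix X
  assume "X \<in> (\<lambda>q. translate_modn n (int q) A) ` {0..<n}"
  then obtain q where q: "q < n" and X: "X = translate_modn n (int q) A" by auto
  have "(\<lambda>p. modn n (int p * a)) ` {0..<n} = {1..int n}"
    using bij_betw_modn_affine[OF assms, of 0] by (simp add: bij_betw_def)
  then have "modn n (int q) \<in> (\<lambda>p. modn n (int p * a)) ` {0..<n}"
    using modn_in_range[OF n] by simp
  then obtain p where "p < n" "int n dvd int q - int p * a" using modn_eq_iff[OF n] by auto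
  then show "X \<in> (\<lambda>p. translate_modn n (int p * a) A) ` {0..<n}"
    using X translate_modn_cong[OF n] by auto
qed

lemma length_rep_vec [simp]: "length (rep_vec k g) = k"
  by (simp add: rep_vec_def)

lemma rep_vec_nth: "i < k \<Longrightarrow> rep_vec k g ! i = 1 + sum_list (take i g)"
  by (simp add: rep_vec_def)

lemma rep_vec_nth_Suc:
  "Suc i < k \<Longrightarrow> i < length g \<Longrightarrow> rep_vec k g ! Suc i = rep_vec k g ! i + g ! i"
  by (simp add: rep_vec_nth take_Suc_conv_app_nth)

lemma rep_vec_strict_sorted:
  assumes "k \<le> Suc (length g)" "\<And>i. Suc i < k \<Longrightarrow> 0 < g ! i"
  shows "sorted_wrt (<) (rep_vec k g)"
  unfolding sorted_wrt_iff_nth_Suc_transp[OF transp_on_less]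
  using assms by (simp add: rep_vec_nth_Suc)

lemma G_tot_D:
  assumes "g \<in> G_tot n k" "0 < n" "0 < k"
  shows "length g = k" "\<And>i. Suc i < k \<Longrightarrow> 0 < g ! i" "sum_list (take (k - 1) g) < int n"
proof -
  obtain \<sigma> c where \<sigma>: "\<sigma> \<in> {sigma_min k .. sigma_max n k}" and c: "c \<in> S_set n k \<sigma>"
    and g: "g = c @ [if \<sigma> \<le> int n div 2 then - \<sigma> else int n - \<sigma>]"
    using assms(1) unfolding G_tot_def G_set_def by blast
  have len: "length c = k - 1" using c by (simp add: S_set_def)
  show "length g = k" using g len assms(3) by simp
  show "0 < g ! i" if "Suc i < k" for i
    using c that g len by (auto simp: S_set_def nth_append)
  have "1 \<le> \<lceil>real n / real k\<rceil>" using assms(2,3) by simp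
  moreover have "\<sigma> \<le> int n - \<lceil>real n / real k\<rceil>" using \<sigma> by (simp add: sigma_max_def)
  ultimately have "\<sigma> < int n" by linarith
  then show "sum_list (take (k - 1) g) < int n"
    using c g len by (simp add: S_set_def)
qed

lemma G_tot_rep_vec:
  assumes "g \<in> G_tot n k" "0 < n" "0 < k"
  shows "sorted_wrt (<) (rep_vec k g)" "set (rep_vec k g) \<subseteq> {1..int n}"
proof -
  note g = G_tot_D[OF assms]
  show sorted: "sorted_wrt (<) (rep_vec k g)"
    using g(1,2) by (intro rep_vec_strict_sorted) auto
  have bounds: "rep_vec k g ! 0 \<le> rep_vec k g ! i \<and> rep_vec k g ! i \<le> rep_vec k g ! (k - 1)"
    if "i < k" for i
    using sorted_nth_mono[OF strict_sorted_imp_sorted[OF sorted]] that by simp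
  have "rep_vec k g ! i \<in> {1..int n}" if "i < k" for i
    using bounds[OF that] that g(3) assms(3) by (simp add: rep_vec_nth)
  then show "set (rep_vec k g) \<subseteq> {1..int n}"
    by (auto simp: in_set_conv_nth)
qed

lemma set_C_set: "set ` C_set n k g = (\<lambda>q. translate_modn n (int q) (set (rep_vec k g))) ` {0..<n}"
proof -
  have "C_set n k g = (\<lambda>p. map (\<lambda>x. modn n (x + int p)) (rep_vec k g)) ` {0..<n}"
    unfolding C_set_def by auto
  then show ?thesis by (simp add: image_image translate_modn_def)
qed

theorem lemma1:
  fixes n k :: nat and g :: "int list"
  assumes "prime n"
    and "2 \<le> k" and "2 * k < n"
    and "g \<in> G_tot n k"
  defines "v \<equiv> (\<lambda>p::nat. modn n (1 + int p * g ! 0))"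
    and "E \<equiv> (\<lambda>p::nat. set (map (\<lambda>x. modn n (x + int p * g ! 0)) (rep_vec k g)))"
  shows "berge_ham_cycle n k v E
     \<and> bij_betw v {0..<n} {1..int n}
     \<and> (\<forall>p < n. E p \<subseteq> {1..int n} \<and> card (E p) = k)
     \<and> inj_on E {0..<n}
     \<and> (\<forall>p < n. {v p, v ((p + 1) mod n)} \<subseteq> E p)
     \<and> E ` {0..<n} = set ` C_set n k g"
proof -
  define R where "R = rep_vec k g"
  define a where "a = g ! 0"
  have n: "0 < n" and k: "0 < k" using assms(2,3) by simp_all
  have sorted: "sorted_wrt (<) R" and R: "set R \<subseteq> {1..int n}"
    using G_tot_rep_vec[OF assms(4) n k] by (simp_all add: R_def)
  have E: "E = (\<lambda>p. translate_modn n (int p * a) (set R))"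
    by (simp add: E_def R_def a_def translate_modn_def)
  have R01: "R ! 0 = 1" "R ! 1 = 1 + a"
    using assms(2) G_tot_D(1)[OF assms(4) n k]
    by (simp_all add: R_def a_def rep_vec_nth take_Suc_conv_app_nth)
  moreover have "R ! 0 < R ! 1" "R ! 1 \<in> set R"
    using sorted assms(2) by (simp_all add: R_def sorted_wrt_nth_less)
  ultimately have unit: "\<not> int n dvd a" using R not_dvd_if_in_range by auto
  have "distinct R" using sorted strict_sorted_iff by blast
  then have card_R: "card (set R) = k" by (simp add: distinct_card R_def)
  have adjacent: "{v p, v ((p + 1) mod n)} \<subseteq> E p" for p
  proof -
    have "int ((p + 1) mod n) * a mod int n = (a + int p * a) mod int n"
      using mod_mult_left_eq[of "int p + 1" "int n" a] by (simp add: of_nat_mod algebra_simps)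
    then have "v ((p + 1) mod n) = modn n (R ! 1 + int p * a)"
      using R01 modn_eq_iff[OF n] by (simp add: v_def a_def mod_eq_dvd_iff algebra_simps)
    moreover have "v p = modn n (R ! 0 + int p * a)" using R01 by (simp add: v_def a_def)
    ultimately show ?thesis using assms(2) by (simp add: E translate_modn_def R_def)
  qed
  have "bij_betw v {0..<n} {1..int n}"
    unfolding v_def using bij_betw_modn_affine[OF assms(1) unit] by (simp add: a_def)
  moreover have "inj_on E {0..<n}"
    using inj_on_translate_modn_mult[OF assms(1) unit R] card_R assms(2,3) by (simp add: E)
  moreover have "E ` {0..<n} = set ` C_set n k g"
    using translate_modn_mult_image[OF assms(1) unit] by (simp add: E set_C_set R_def)
  ultimately show ?thesis
    using card_translate_modn[OF n R] card_R adjacent translate_modn_subset[OF n]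
    by (simp add: berge_ham_cycle_def hyperedges_K_def E)
qed

end
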